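(* Let $H$ be a connected graph that is not a tree. If $H\in\mathcal{G}$, then the girth of $H$ is at most $6$.
   Context: All graphs are finite and simple. $d_{H,2}(x,y)=\min\{d_H(x,y),2\}$ with $d_H$ the shortest-path distance. A local adjacency basis of $H$ is a minimum-size set $S\subseteq V(H)$ such that for any two adjacent vertices $x,y$ some $s\in S$ satisfies $d_{H,2}(s,x)\ne d_{H,2}(s,y)$. $\mathcal{G}$: class of graphs $H$ such that every local adjacency basis $B$ of $H$ satisfies $B\subseteq N_H(v)$ for some $v\in V(H)$ (open neighbourhood). The girth is the length of a shortest cycle. *)

theory Defs
  imports Main "HOL-Library.Extended_Nat"
begin

definition graph :: "'a set \<Rightarrow> ('a \<Rightarrow> 'a \<Rightarrow> bool) \<Rightarrow> bool" where
  "graph V E \<longleftrightarrow> finite V \<and> (\<forall>x y. E x y \<longrightarrow> x \<in> V \<and> y \<in> V) \<and>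
                  (\<forall>x y. E x y \<longrightarrow> E y x) \<and> (\<forall>x. \<not> E x x)"

definition walk :: "'a set \<Rightarrow> ('a \<Rightarrow> 'a \<Rightarrow> bool) \<Rightarrow> 'a list \<Rightarrow> bool" where
  "walk V E p \<longleftrightarrow> p \<noteq> [] \<and> set p \<subseteq> V \<and> (\<forall>i. Suc i < length p \<longrightarrow> E (p ! i) (p ! Suc i))"

text \<open>Shortest-path distance (infinity if no walk exists).\<close>
definition dist :: "'a set \<Rightarrow> ('a \<Rightarrow> 'a \<Rightarrow> bool) \<Rightarrow> 'a \<Rightarrow> 'a \<Rightarrow> enat" where
  "dist V E x y = Inf {enat (length p - 1) | p. walk V E p \<and> hd p = x \<and> last p = y}"

definition dist2 :: "'a set \<Rightarrow> ('a \<Rightarrow> 'a \<Rightarrow> bool) \<Rightarrow> 'a \<Rightarrow> 'a \<Rightarrow> enat" where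
  "dist2 V E x y = min (dist V E x y) 2"

definition connected :: "'a set \<Rightarrow> ('a \<Rightarrow> 'a \<Rightarrow> bool) \<Rightarrow> bool" where
  "connected V E \<longleftrightarrow> (\<forall>x\<in>V. \<forall>y\<in>V. \<exists>p. walk V E p \<and> hd p = x \<and> last p = y)"

definition is_cycle :: "'a set \<Rightarrow> ('a \<Rightarrow> 'a \<Rightarrow> bool) \<Rightarrow> 'a list \<Rightarrow> bool" where
  "is_cycle V E c \<longleftrightarrow> length c \<ge> 3 \<and> distinct c \<and> walk V E c \<and> E (last c) (hd c)"

definition is_tree :: "'a set \<Rightarrow> ('a \<Rightarrow> 'a \<Rightarrow> bool) \<Rightarrow> bool" where
  "is_tree V E \<longleftrightarrow> connected V E \<and> V \<noteq> {} \<and> (\<nexists>c. is_cycle V E c)"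

text \<open>Girth: length of a shortest cycle (infinity for acyclic graphs).\<close>
definition girth :: "'a set \<Rightarrow> ('a \<Rightarrow> 'a \<Rightarrow> bool) \<Rightarrow> enat" where
  "girth V E = Inf {enat (length c) | c. is_cycle V E c}"

definition nbhd :: "'a set \<Rightarrow> ('a \<Rightarrow> 'a \<Rightarrow> bool) \<Rightarrow> 'a \<Rightarrow> 'a set" where
  "nbhd V E v = {u \<in> V. E v u}"

definition local_adj_resolving :: "'a set \<Rightarrow> ('a \<Rightarrow> 'a \<Rightarrow> bool) \<Rightarrow> 'a set \<Rightarrow> bool" where
  "local_adj_resolving V E S \<longleftrightarrow> S \<subseteq> V \<and>
     (\<forall>x y. E x y \<longrightarrow> (\<exists>s\<in>S. dist2 V E s x \<noteq> dist2 V E s y))"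

definition local_adj_basis :: "'a set \<Rightarrow> ('a \<Rightarrow> 'a \<Rightarrow> bool) \<Rightarrow> 'a set \<Rightarrow> bool" where
  "local_adj_basis V E B \<longleftrightarrow> local_adj_resolving V E B \<and>
     (\<forall>S. local_adj_resolving V E S \<longrightarrow> card B \<le> card S)"

definition in_class_G :: "'a set \<Rightarrow> ('a \<Rightarrow> 'a \<Rightarrow> bool) \<Rightarrow> bool" where
  "in_class_G V E \<longleftrightarrow> (\<forall>B. local_adj_basis V E B \<longrightarrow> (\<exists>v\<in>V. B \<subseteq> nbhd V E v))"

end

theory Submission imports Defs begin

text \<open>Let \<open>B\<close> be a local adjacency basis contained in the neighbourhood of \<open>v\<close>. A vertex of \<open>B\<close>
  can only resolve an edge it is incident or adjacent to, so every edge has an endpoint reachable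
  from \<open>v\<close> by a walk of length one or two. If the girth exceeded 6, every vertex of a cycle would then
  be at distance at most 2 from \<open>v\<close> (otherwise two such walks through its cycle neighbours close up
  into a cycle of length at most 6), hence adjacent to \<open>v\<close> (otherwise a cycle of length at most 5
  appears), and two consecutive cycle vertices adjacent to \<open>v\<close> form a triangle.\<close>

lemma walk_Cons_Cons: "walk V E (x # y # xs) \<longleftrightarrow> x \<in> V \<and> E x y \<and> walk V E (y # xs)"
  unfolding walk_def
proof safe
  fix i assume "\<forall>i. Suc i < length (x # y # xs) \<longrightarrow> E ((x # y # xs) ! i) ((x # y # xs) ! Suc i)"
    and "Suc i < length (y # xs)"
  then show "E ((y # xs) ! i) ((y # xs) ! Suc i)" by (metis length_Cons nth_Cons_Suc Suc_less_eq)
next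
  fix i assume "E x y" "\<forall>i. Suc i < length (y # xs) \<longrightarrow> E ((y # xs) ! i) ((y # xs) ! Suc i)"
    and "Suc i < length (x # y # xs)"
  then show "E ((x # y # xs) ! i) ((x # y # xs) ! Suc i)" by (cases i) auto
qed auto

lemma walk_singleton: "walk V E [x] \<longleftrightarrow> x \<in> V"
  unfolding walk_def by auto

lemma le_dist_if_walks_longer:
  assumes "\<And>p. walk V E p \<Longrightarrow> hd p = x \<Longrightarrow> last p = y \<Longrightarrow> n < length p"
  shows "enat n \<le> dist V E x y"
  unfolding dist_def
proof (rule Inf_greatest, clarify)
  fix p assume "walk V E p" "x = hd p" "y = last p"
  then show "enat n \<le> enat (length p - 1)" using assms by fastforce
qed

lemma dist_self: "x \<in> V \<Longrightarrow> dist V E x x = 0"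
proof -
  assume "x \<in> V"
  then have "walk V E [x]" by (simp add: walk_singleton)
  then have "dist V E x x \<le> enat (length [x] - 1)"
    unfolding dist_def by (intro Inf_lower) force
  then show ?thesis by (simp flip: zero_enat_def)
qed

lemma one_le_dist:
  assumes "x \<noteq> y"
  shows "1 \<le> dist V E x y"
proof -
  have "1 < length p" if "walk V E p" "hd p = x" "last p = y" for p
  proof (rule ccontr)
    assume "\<not> 1 < length p"
    moreover have "p \<noteq> []" using \<open>walk V E p\<close> by (simp add: walk_def)
    ultimately obtain a where "p = [a]" by (cases p) auto
    then show False using that assms by simp
  qed
  then show ?thesis using le_dist_if_walks_longer[of V E x y 1] by (simp add: one_enat_def)
qed

lemma two_le_dist:
  assumes "x \<noteq> y" "\<not> E x y"
  shows "2 \<le> dist V E x y"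
proof -
  have "2 < length p" if "walk V E p" "hd p = x" "last p = y" for p
  proof (rule ccontr)
    assume "\<not> 2 < length p"
    moreover have "p \<noteq> []" using \<open>walk V E p\<close> by (simp add: walk_def)
    ultimately consider a where "p = [a]" | a b where "p = [a, b]"
      by (cases p; cases "tl p") auto
    then show False using that assms by cases (auto simp: walk_Cons_Cons)
  qed
  then show ?thesis using le_dist_if_walks_longer[of V E x y 2] by (simp add: numeral_eq_enat)
qed

lemma dist2_neq_imp_close:
  assumes "dist2 V E s x \<noteq> dist2 V E s y"
  shows "s = x \<or> E s x \<or> s = y \<or> E s y"
proof (rule ccontr)
  assume "\<not> ?thesis"
  then have "dist2 V E s x = 2" "dist2 V E s y = 2"
    using two_le_dist unfolding dist2_def by (metis min.absorb2)+
  with assms show False by simp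
qed

lemma local_adj_resolving_vertices: "graph V E \<Longrightarrow> local_adj_resolving V E V"
  unfolding local_adj_resolving_def
proof (intro conjI allI impI)
  fix x y assume "graph V E" "E x y"
  then have "x \<in> V" "x \<noteq> y" by (auto simp: graph_def)
  moreover have "dist2 V E x x = 0" using dist_self[OF \<open>x \<in> V\<close>] by (simp add: dist2_def)
  moreover have "1 \<le> dist2 V E x y" using one_le_dist[OF \<open>x \<noteq> y\<close>] by (simp add: dist2_def)
  ultimately have "dist2 V E x x \<noteq> dist2 V E x y" by auto
  with \<open>x \<in> V\<close> show "\<exists>s\<in>V. dist2 V E s x \<noteq> dist2 V E s y" by blast
qed simp

lemma local_adj_basis_exists:
  assumes "graph V E"
  obtains B where "local_adj_basis V E B"
proof -
  let ?P = "\<lambda>n. \<exists>S. local_adj_resolving V E S \<and> card S = n"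
  have "?P (card V)" using local_adj_resolving_vertices[OF assms] by blast
  then obtain B where B: "local_adj_resolving V E B" "card B = (LEAST n. ?P n)"
    using LeastI_ex[of ?P] by blast
  have "card B \<le> card S" if "local_adj_resolving V E S" for S
    using B(2) Least_le[of ?P "card S"] that by auto
  with B have "local_adj_basis V E B" unfolding local_adj_basis_def by blast
  then show thesis by (rule that)
qed

definition within2 :: "('a \<Rightarrow> 'a \<Rightarrow> bool) \<Rightarrow> 'a \<Rightarrow> 'a \<Rightarrow> bool" where
  "within2 E v x \<longleftrightarrow> (\<exists>s. E v s \<and> (s = x \<or> E s x))"

lemma basis_in_nbhd_imp_edge_within2:
  assumes "local_adj_basis V E B" "B \<subseteq> nbhd V E v" "E x y"
  shows "within2 E v x \<or> within2 E v y"
proof -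
  obtain s where "s \<in> B" "dist2 V E s x \<noteq> dist2 V E s y"
    using assms(1,3) unfolding local_adj_basis_def local_adj_resolving_def by blast
  moreover from \<open>s \<in> B\<close> have "E v s" using assms(2) unfolding nbhd_def by blast
  ultimately show ?thesis using dist2_neq_imp_close[of V E s x y] unfolding within2_def by blast
qed

lemma girth_le_cycle_length: "is_cycle V E c \<Longrightarrow> girth V E \<le> enat (length c)"
  unfolding girth_def by (rule Inf_lower) blast

lemma cycle_neighbours:
  assumes "is_cycle V E c" "y \<in> set c"
  shows "\<exists>a\<in>set c. \<exists>b\<in>set c. a \<noteq> b \<and> E a y \<and> E y b"
proof -
  let ?L = "length c"
  have c: "3 \<le> ?L" "distinct c" "E (last c) (hd c)" "\<And>i. Suc i < ?L \<Longrightarrow> E (c ! i) (c ! Suc i)"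
    using assms(1) by (auto simp: is_cycle_def walk_def)
  have "c \<noteq> []" using c(1) by auto
  then have last: "last c = c ! (?L - 1)" and hd: "hd c = c ! 0"
    by (simp_all add: last_conv_nth hd_conv_nth)
  obtain j where j: "j < ?L" "y = c ! j" using assms(2) by (metis in_set_conv_nth)
  obtain i k where "i < ?L" "k < ?L" "i \<noteq> k" "E (c ! i) y" "E y (c ! k)"
  proof (cases "j = 0")
    case True
    have "E (c ! (?L - 1)) (c ! 0)" "E (c ! 0) (c ! 1)" using c(1,3,4) last hd by auto
    then show thesis using that[of "?L - 1" 1] True c(1) j by auto
  next
    case False
    then have before: "E (c ! (j - 1)) y" using c(4)[of "j - 1"] j by simp
    show thesis
    proof (cases "j = ?L - 1")
      case True
      then have "E y (c ! 0)" using c(3) last hd j by simp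
      then show thesis using that[of "j - 1" 0] before True c(1) \<open>c \<noteq> []\<close> by auto
    next
      case False
      then have "E y (c ! (j + 1))" using c(4)[of j] j by simp
      then show thesis using that[of "j - 1" "j + 1"] before False j by auto
    qed
  qed
  with c(2) show ?thesis by (metis nth_eq_iff_index_eq nth_mem)
qed

locale girth_gt_6 =
  fixes V :: "'a set" and E :: "'a \<Rightarrow> 'a \<Rightarrow> bool"
  assumes graph: "graph V E" and girth: "6 < girth V E"
begin

lemma edge_sym: "E x y \<Longrightarrow> E y x" and edge_irrefl: "\<not> E x x" and edge_in_V: "E x y \<Longrightarrow> x \<in> V \<and> y \<in> V"
  using graph by (auto simp: graph_def)

lemma seven_le_cycle_length: "is_cycle V E c \<Longrightarrow> 7 \<le> length c"
  using order_less_le_trans[OF girth girth_le_cycle_length, of c] by (simp add: numeral_eq_enat)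

lemma no_triangle: "E x y \<Longrightarrow> E y z \<Longrightarrow> E z x \<Longrightarrow> False"
  using seven_le_cycle_length[of "[x, y, z]"] edge_irrefl edge_in_V
  by (auto simp: is_cycle_def walk_Cons_Cons walk_singleton)

lemma no_4_cycle:
  "distinct [a, b, c, d] \<Longrightarrow> E a b \<Longrightarrow> E b c \<Longrightarrow> E c d \<Longrightarrow> E d a \<Longrightarrow> False"
  using seven_le_cycle_length[of "[a, b, c, d]"] edge_in_V
  by (auto simp: is_cycle_def walk_Cons_Cons walk_singleton)

lemma no_5_cycle:
  "distinct [a, b, c, d, e] \<Longrightarrow> E a b \<Longrightarrow> E b c \<Longrightarrow> E c d \<Longrightarrow> E d e \<Longrightarrow> E e a \<Longrightarrow> False"
  using seven_le_cycle_length[of "[a, b, c, d, e]"] edge_in_V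
  by (auto simp: is_cycle_def walk_Cons_Cons walk_singleton)

lemma no_6_cycle:
  "distinct [a, b, c, d, e, f] \<Longrightarrow> E a b \<Longrightarrow> E b c \<Longrightarrow> E c d \<Longrightarrow> E d e \<Longrightarrow> E e f
    \<Longrightarrow> E f a \<Longrightarrow> False"
  using seven_le_cycle_length[of "[a, b, c, d, e, f]"] edge_in_V
  by (auto simp: is_cycle_def walk_Cons_Cons walk_singleton)

context
  fixes W :: "'a set" and v :: 'a
  assumes W_deg: "\<And>y. y \<in> W \<Longrightarrow> \<exists>a\<in>W. \<exists>b\<in>W. a \<noteq> b \<and> E a y \<and> E y b"
    and cover: "\<And>x y. x \<in> W \<Longrightarrow> y \<in> W \<Longrightarrow> E x y \<Longrightarrow> within2 E v x \<or> within2 E v y"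
begin

lemma within2_if_covered:
  assumes "y \<in> W"
  shows "within2 E v y"
proof (rule ccontr)
  assume far: "\<not> within2 E v y"
  obtain a b where ab: "a \<in> W" "b \<in> W" "a \<noteq> b" "E a y" "E y b"
    using W_deg[OF \<open>y \<in> W\<close>] by blast
  have "within2 E v a" "within2 E v b"
    using cover[OF ab(1) \<open>y \<in> W\<close> ab(4)] cover[OF \<open>y \<in> W\<close> ab(2) ab(5)] far by blast+
  then obtain s t where s: "E v s" "s = a \<or> E s a" and t: "E v t" "t = b \<or> E t b"
    unfolding within2_def by blast
  have far': "\<And>u. E v u \<Longrightarrow> u \<noteq> y \<and> \<not> E u y" using far unfolding within2_def by blast
  have "s \<noteq> a" using far' s(1) ab(4) by blast
  with s have sa: "E s a" by simp
  have "t \<noteq> b" using far' t(1) edge_sym[OF ab(5)] by blast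
  with t have tb: "E t b" by simp
  have "v \<noteq> y" using far ab(4) edge_sym[OF ab(4)] unfolding within2_def by blast
  moreover have "v \<noteq> a" "v \<noteq> b" "s \<noteq> y" "t \<noteq> y" "s \<noteq> b" "t \<noteq> a"
    using far' s(1) t(1) ab(4,5) edge_sym[OF ab(5)] edge_irrefl by blast+
  moreover have "v \<noteq> s" "v \<noteq> t" "s \<noteq> a" "t \<noteq> b" "a \<noteq> y" "b \<noteq> y"
    using s(1) t(1) sa tb ab(4,5) edge_irrefl by metis+
  ultimately show False
    using no_4_cycle[of s a y b] no_6_cycle[of v s a y b t] ab(3-5) s(1) t(1) sa tb edge_sym[OF tb] edge_sym[OF t(1)]
    by (cases "s = t") auto
qed

lemma adjacent_if_covered:
  assumes "y \<in> W" "y \<noteq> v"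
  shows "E v y"
proof (rule ccontr)
  assume "\<not> E v y"
  then obtain p where p: "E v p" "E p y"
    using within2_if_covered[OF \<open>y \<in> W\<close>] unfolding within2_def by blast
  obtain a b where ab: "a \<in> W" "b \<in> W" "a \<noteq> b" "E a y" "E y b"
    using W_deg[OF \<open>y \<in> W\<close>] by blast
  have "E v x" if "x \<in> W" "E x y" for x
  proof (rule ccontr)
    assume "\<not> E v x"
    then obtain s where s: "E v s" "E s x"
      using within2_if_covered[OF \<open>x \<in> W\<close>] unfolding within2_def by blast
    have "v \<noteq> x" "s \<noteq> y" "x \<noteq> p" using \<open>\<not> E v y\<close> \<open>\<not> E v x\<close> \<open>E x y\<close> s(1) p(1) by blast+
    moreover have "v \<noteq> s" "v \<noteq> p" "s \<noteq> x" "x \<noteq> y" "y \<noteq> p"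
      using s \<open>E x y\<close> p edge_irrefl by metis+
    ultimately show False
      using no_triangle[of s x y] no_5_cycle[of v s x y p] \<open>y \<noteq> v\<close> s \<open>E x y\<close> p edge_sym[OF p(1)] edge_sym[OF p(2)]
      by (cases "s = p") auto
  qed
  then have "E v a" "E v b" using ab(1,2,4) edge_sym[OF ab(5)] by blast+
  moreover have "v \<noteq> a" "v \<noteq> b" using \<open>\<not> E v y\<close> ab(4,5) edge_sym[OF ab(5)] by blast+
  moreover have "a \<noteq> y" "b \<noteq> y" using ab(4,5) edge_irrefl by metis+
  ultimately show False using no_4_cycle[of v a y b] ab(3-5) \<open>y \<noteq> v\<close> edge_sym[OF \<open>E v b\<close>] by auto
qed

lemma covered_set_empty: "W = {}"
proof (rule ccontr)
  assume "W \<noteq> {}"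
  then obtain y where "y \<in> W" "y \<noteq> v" using W_deg by blast
  moreover obtain a b where "a \<in> W" "b \<in> W" "a \<noteq> b" "E a y" "E y b"
    using W_deg[OF \<open>y \<in> W\<close>] by blast
  ultimately obtain u where "u \<in> W" "u \<noteq> v" "E y u" using edge_sym by metis
  then show False using no_triangle[of v y u] adjacent_if_covered \<open>y \<in> W\<close> \<open>y \<noteq> v\<close> edge_sym by blast
qed

end

end

theorem lemma1:
  fixes V :: "'a set" and E :: "'a \<Rightarrow> 'a \<Rightarrow> bool"
  assumes "graph V E" and "connected V E" and "V \<noteq> {}" and "\<not> is_tree V E"
    and "in_class_G V E"
  shows "girth V E \<le> 6"
proof (rule ccontr)
  assume "\<not> girth V E \<le> 6"
  then have girth: "6 < girth V E" by simp
  obtain B where B: "local_adj_basis V E B" using local_adj_basis_exists[OF assms(1)] .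
  then obtain v where "B \<subseteq> nbhd V E v" using assms(5) unfolding in_class_G_def by blast
  then have cover: "within2 E v x \<or> within2 E v y" if "E x y" for x y
    using basis_in_nbhd_imp_edge_within2[OF B _ that] by blast
  interpret girth_gt_6 V E using assms(1) girth by unfold_locales
  obtain c where c: "is_cycle V E c" using assms(2-4) unfolding is_tree_def by blast
  then have "set c = {}" using covered_set_empty cycle_neighbours[OF c] cover by blast
  with c show False by (simp add: is_cycle_def)
qed

end
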